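(* $\mathcal M_{\max}$ is a well-defined functor from $\mathbf{Ord}$ to $\mathbf{Ord}$: for every monotone $f:X\to Y$, $\mathcal M_{\max}(f)$ is a monotone map $(\mathcal M(X),\le_{\mathcal M(X)})\to(\mathcal M(Y),\le_{\mathcal M(Y)})$, $\mathcal M_{\max}(\mathrm{id}_X)=\mathrm{id}$, and $\mathcal M_{\max}(g\circ f)=\mathcal M_{\max}(g)\circ\mathcal M_{\max}(f)$ for monotone $f:X\to Y$, $g:Y\to Z$.
   Context: $\mathbf{Ord}$ is the category of partially ordered sets and monotone maps. For a poset $(X,\le_X)$, $\mathcal M(X)$ is the set of nonempty finite subsets of $X$ whose elements are pairwise incomparable, ordered by $S\le_{\mathcal M(X)}T$ iff every $x\in S$ has some $y\in T$ with $x\le_X y$. For $S\subseteq X$, $S^{\circ}$ denotes the set of maximal elements of $S$. The maximal functor is given by $\mathcal M_{\max}(X)=(\mathcal M(X),\le_{\mathcal M(X)})$ and $\mathcal M_{\max}(f)(S)=(f(S))^{\circ}$ for monotone $f:X\to Y$. *)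

theory Defs
  imports Main
begin

definition poset :: "'a set \<Rightarrow> ('a \<Rightarrow> 'a \<Rightarrow> bool) \<Rightarrow> bool" where
  "poset X le \<longleftrightarrow>
     (\<forall>x\<in>X. le x x) \<and>
     (\<forall>x\<in>X. \<forall>y\<in>X. le x y \<and> le y x \<longrightarrow> x = y) \<and>
     (\<forall>x\<in>X. \<forall>y\<in>X. \<forall>z\<in>X. le x y \<and> le y z \<longrightarrow> le x z)"

definition mono_map :: "'a set \<Rightarrow> ('a \<Rightarrow> 'a \<Rightarrow> bool) \<Rightarrow> 'b set \<Rightarrow> ('b \<Rightarrow> 'b \<Rightarrow> bool)
    \<Rightarrow> ('a \<Rightarrow> 'b) \<Rightarrow> bool" where
  "mono_map X leX Y leY f \<longleftrightarrow>
     f ` X \<subseteq> Y \<and> (\<forall>x\<in>X. \<forall>y\<in>X. leX x y \<longrightarrow> leY (f x) (f y))"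

definition Mset :: "'a set \<Rightarrow> ('a \<Rightarrow> 'a \<Rightarrow> bool) \<Rightarrow> 'a set set" where
  "Mset X le = {S. S \<subseteq> X \<and> S \<noteq> {} \<and> finite S \<and>
                   (\<forall>x\<in>S. \<forall>y\<in>S. x \<noteq> y \<longrightarrow> \<not> le x y \<and> \<not> le y x)}"

definition Mle :: "('a \<Rightarrow> 'a \<Rightarrow> bool) \<Rightarrow> 'a set \<Rightarrow> 'a set \<Rightarrow> bool" where
  "Mle le S T \<longleftrightarrow> (\<forall>x\<in>S. \<exists>y\<in>T. le x y)"

definition maxel :: "('a \<Rightarrow> 'a \<Rightarrow> bool) \<Rightarrow> 'a set \<Rightarrow> 'a set" where
  "maxel le S = {x\<in>S. \<forall>y\<in>S. le x y \<longrightarrow> y = x}"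

definition Mmax_map :: "('b \<Rightarrow> 'b \<Rightarrow> bool) \<Rightarrow> ('a \<Rightarrow> 'b) \<Rightarrow> 'a set \<Rightarrow> 'b set" where
  "Mmax_map leY f S = maxel leY (f ` S)"

end

theory Submission
  imports Defs
begin

text \<open>
  The order on \<open>\<M>(X)\<close> is antisymmetric because its elements are antichains. For monotone \<open>f\<close>,
  \<open>(f S)\<degree> \<le> f S \<le> f T \<le> (f T)\<degree>\<close> whenever \<open>S \<le> T\<close>, since every element of a finite subset of a
  poset lies below a maximal one. The same fact makes \<open>(f S)\<degree>\<close> cofinal in \<open>f S\<close>, hence
  \<open>g ((f S)\<degree>)\<close> cofinal in \<open>g (f S)\<close>, and a set and a cofinal subset have the same maximal
  elements; this gives functoriality.
\<close>

lemma poset_refl: "poset A le \<Longrightarrow> x \<in> A \<Longrightarrow> le x x"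
  unfolding poset_def by blast

lemma poset_antisym: "poset A le \<Longrightarrow> x \<in> A \<Longrightarrow> y \<in> A \<Longrightarrow> le x y \<Longrightarrow> le y x \<Longrightarrow> x = y"
  unfolding poset_def by blast

lemma poset_trans:
  "poset A le \<Longrightarrow> x \<in> A \<Longrightarrow> y \<in> A \<Longrightarrow> z \<in> A \<Longrightarrow> le x y \<Longrightarrow> le y z \<Longrightarrow> le x z"
  unfolding poset_def by blast

lemma maxel_subset: "maxel le B \<subseteq> B"
  unfolding maxel_def by blast

lemma maxel_Mset: "S \<in> Mset A le \<Longrightarrow> maxel le S = S"
  unfolding Mset_def maxel_def by blast

lemma finite_maxel_above:
  assumes P: "poset A le" and B: "finite B" "B \<subseteq> A" and x: "x \<in> B"
  shows "\<exists>m\<in>maxel le B. le x m"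
proof -
  define up where "up y = {z\<in>B. le y z}" for y
  obtain m where m: "m \<in> B" "le x m"
    and least: "\<And>y. y \<in> B \<Longrightarrow> le x y \<Longrightarrow> card (up m) \<le> card (up y)"
    using ex_has_least_nat[of "\<lambda>y. y \<in> B \<and> le x y" x "\<lambda>y. card (up y)"]
      x B poset_refl[OF P] by blast
  have "y = m" if y: "y \<in> B" "le m y" for y
  proof (rule ccontr)
    assume "y \<noteq> m"
    have in_A: "x \<in> A" "m \<in> A" "y \<in> A" using x m y B by auto
    have "up y \<subset> up m"
    proof
      show "up y \<subseteq> up m" using poset_trans[OF P] in_A y B unfolding up_def by blast
      show "up y \<noteq> up m"
        using poset_antisym[OF P] poset_refl[OF P] in_A m y \<open>y \<noteq> m\<close> unfolding up_def by blast
    qed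
    then have "card (up y) < card (up m)" using B unfolding up_def by (simp add: psubset_card_mono)
    moreover have "le x y" using poset_trans[OF P] in_A m y by blast
    ultimately show False using least[OF y(1)] by simp
  qed
  then have "m \<in> maxel le B" using m unfolding maxel_def by blast
  then show ?thesis using m by blast
qed

lemma maxel_in_Mset:
  assumes P: "poset A le" and B: "finite B" "B \<subseteq> A" "B \<noteq> {}"
  shows "maxel le B \<in> Mset A le"
proof -
  obtain x where "x \<in> B" using B(3) by blast
  then have "maxel le B \<noteq> {}" using finite_maxel_above[OF P B(1,2)] by blast
  moreover have "maxel le B \<subseteq> A" "finite (maxel le B)"
    using maxel_subset[of le B] B(1,2) finite_subset by blast+
  ultimately show ?thesis unfolding Mset_def maxel_def by blast
qed

lemma Mle_subset:
  assumes "poset A le" "B \<subseteq> A" "B \<subseteq> C"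
  shows "Mle le B C"
  unfolding Mle_def using assms poset_refl[OF assms(1)] by blast

lemma Mle_maxel:
  assumes "poset A le" "finite B" "B \<subseteq> A"
  shows "Mle le B (maxel le B)"
  unfolding Mle_def using finite_maxel_above[OF assms] by blast

lemma Mle_trans:
  assumes P: "poset A le" and "S \<subseteq> A" "T \<subseteq> A" "U \<subseteq> A"
    and ST: "Mle le S T" and TU: "Mle le T U"
  shows "Mle le S U"
  unfolding Mle_def
proof
  fix x assume "x \<in> S"
  then obtain y z where "y \<in> T" "le x y" "z \<in> U" "le y z"
    using ST TU unfolding Mle_def by blast
  then show "\<exists>z\<in>U. le x z"
    using poset_trans[OF P, of x y z] \<open>x \<in> S\<close> assms(2-4) by blast
qed

lemma Mle_image:
  assumes f: "mono_map X leX Y leY f" and "S \<subseteq> X" "T \<subseteq> X" and ST: "Mle leX S T"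
  shows "Mle leY (f ` S) (f ` T)"
  unfolding Mle_def
proof
  fix y assume "y \<in> f ` S"
  then obtain x x' where "y = f x" "x \<in> S" "x' \<in> T" "leX x x'"
    using ST unfolding Mle_def by blast
  then show "\<exists>y'\<in>f ` T. leY y y'"
    using f assms(2,3) unfolding mono_map_def by blast
qed

lemma Mle_antichain_subset:
  assumes P: "poset A le" and S: "S \<in> Mset A le" and T: "T \<subseteq> A"
    and ST: "Mle le S T" and TS: "Mle le T S"
  shows "S \<subseteq> T"
proof
  fix x assume x: "x \<in> S"
  then obtain y x' where y: "y \<in> T" "le x y" and x': "x' \<in> S" "le y x'"
    using ST TS unfolding Mle_def by blast
  have in_A: "x \<in> A" "y \<in> A" "x' \<in> A" using x y x' S T unfolding Mset_def by auto
  have "x' = x"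
    using poset_trans[OF P in_A] y x' x S unfolding Mset_def by blast
  then have "y = x" using poset_antisym[OF P] in_A y x' by blast
  then show "x \<in> T" using y by simp
qed

lemma poset_Mset:
  assumes P: "poset A le"
  shows "poset (Mset A le) (Mle le)"
proof -
  have sub: "S \<subseteq> A" if "S \<in> Mset A le" for S using that unfolding Mset_def by blast
  have "Mle le S S" if "S \<in> Mset A le" for S using Mle_subset[OF P sub[OF that]] by blast
  moreover have "S = T" if "S \<in> Mset A le" "T \<in> Mset A le" "Mle le S T" "Mle le T S" for S T
    using Mle_antichain_subset[OF P] sub that by blast
  moreover have "Mle le S U"
    if "S \<in> Mset A le" "T \<in> Mset A le" "U \<in> Mset A le" "Mle le S T" "Mle le T U" for S T U
    using Mle_trans[OF P] sub that by blast
  ultimately show ?thesis unfolding poset_def[of "Mset A le"] by blast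
qed

lemma maxel_cofinal_subset:
  assumes P: "poset A le" and "D \<subseteq> C" "C \<subseteq> A" and cofinal: "Mle le C D"
  shows "maxel le C = maxel le D"
proof (intro equalityI subsetI)
  fix z assume z: "z \<in> maxel le C"
  then obtain d where "d \<in> D" "le z d" using cofinal unfolding Mle_def maxel_def by blast
  then show "z \<in> maxel le D" using z \<open>D \<subseteq> C\<close> unfolding maxel_def by blast
next
  fix z assume z: "z \<in> maxel le D"
  have "w = z" if w: "w \<in> C" "le z w" for w
  proof -
    obtain d where d: "d \<in> D" "le w d" using w cofinal unfolding Mle_def by blast
    have in_A: "z \<in> A" "w \<in> A" "d \<in> A" using z w d assms(2,3) unfolding maxel_def by auto
    have "d = z" using poset_trans[OF P in_A] w d z unfolding maxel_def by blast
    then show "w = z" using poset_antisym[OF P] in_A w d by blast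
  qed
  then show "z \<in> maxel le C" using z \<open>D \<subseteq> C\<close> unfolding maxel_def by blast
qed

lemma Mle_maxel_image:
  assumes PY: "poset Y leY" and f: "mono_map X leX Y leY f"
    and S: "S \<subseteq> X" and T: "T \<subseteq> X" "finite T" and ST: "Mle leX S T"
  shows "Mle leY (maxel leY (f ` S)) (maxel leY (f ` T))"
proof -
  have fS: "f ` S \<subseteq> Y" and fT: "f ` T \<subseteq> Y" using f S T unfolding mono_map_def by auto
  have max_fS: "maxel leY (f ` S) \<subseteq> Y" and max_fT: "maxel leY (f ` T) \<subseteq> Y"
    using subset_trans[OF maxel_subset fS] subset_trans[OF maxel_subset fT] .
  have "Mle leY (maxel leY (f ` S)) (f ` S)" using Mle_subset[OF PY max_fS maxel_subset] .
  moreover have "Mle leY (f ` S) (f ` T)" using Mle_image[OF f S T(1) ST] .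
  moreover have "Mle leY (f ` T) (maxel leY (f ` T))"
    using Mle_maxel[OF PY finite_imageI[OF T(2)] fT] .
  ultimately show ?thesis
    by (meson Mle_trans[OF PY] fS fT max_fS max_fT)
qed

lemma maxel_image_maxel:
  assumes PY: "poset Y leY" and PZ: "poset Z leZ" and g: "mono_map Y leY Z leZ g"
    and B: "finite B" "B \<subseteq> Y"
  shows "maxel leZ (g ` B) = maxel leZ (g ` maxel leY B)"
proof (rule maxel_cofinal_subset[OF PZ])
  show "g ` maxel leY B \<subseteq> g ` B" using maxel_subset by (rule image_mono)
  show "g ` B \<subseteq> Z" using g B(2) unfolding mono_map_def by auto
  show "Mle leZ (g ` B) (g ` maxel leY B)"
    using Mle_image[OF g B(2) subset_trans[OF maxel_subset B(2)] Mle_maxel[OF PY B]] .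
qed

theorem propositionD10:
  fixes X :: "'a set" and leX :: "'a \<Rightarrow> 'a \<Rightarrow> bool"
    and Y :: "'b set" and leY :: "'b \<Rightarrow> 'b \<Rightarrow> bool"
    and Z :: "'c set" and leZ :: "'c \<Rightarrow> 'c \<Rightarrow> bool"
    and f :: "'a \<Rightarrow> 'b" and g :: "'b \<Rightarrow> 'c"
  assumes "poset X leX" and "poset Y leY" and "poset Z leZ"
    and "mono_map X leX Y leY f" and "mono_map Y leY Z leZ g"
  shows "poset (Mset X leX) (Mle leX)
    \<and> mono_map (Mset X leX) (Mle leX) (Mset Y leY) (Mle leY) (Mmax_map leY f)
    \<and> (\<forall>S\<in>Mset X leX. Mmax_map leX id S = S)
    \<and> (\<forall>S\<in>Mset X leX. Mmax_map leZ (g \<circ> f) S = Mmax_map leZ g (Mmax_map leY f S))"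
proof -
  note PX = assms(1) and PY = assms(2) and PZ = assms(3) and f = assms(4) and g = assms(5)
  have S: "S \<subseteq> X" "finite S" "S \<noteq> {}" if "S \<in> Mset X leX" for S
    using that unfolding Mset_def by auto
  have fS: "f ` S \<subseteq> Y" if "S \<subseteq> X" for S using f that unfolding mono_map_def by auto
  have "Mmax_map leY f S \<in> Mset Y leY" if "S \<in> Mset X leX" for S
    using maxel_in_Mset[OF PY finite_imageI fS] S[OF that] by (simp add: Mmax_map_def)
  moreover have "Mle leY (Mmax_map leY f S) (Mmax_map leY f T)"
    if "S \<in> Mset X leX" "T \<in> Mset X leX" "Mle leX S T" for S T
    using Mle_maxel_image[OF PY f] S that by (simp add: Mmax_map_def)
  moreover have "Mmax_map leZ (g \<circ> f) S = Mmax_map leZ g (Mmax_map leY f S)"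
    if "S \<in> Mset X leX" for S
    using maxel_image_maxel[OF PY PZ g finite_imageI fS] S[OF that]
    by (simp add: Mmax_map_def image_comp)
  ultimately show ?thesis
    using poset_Mset[OF PX] maxel_Mset[of _ X leX] by (simp add: mono_map_def Mmax_map_def image_subset_iff)
qed

end
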